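(* Consider the (1+1) EA maximizing $\mathrm{OneMax}$ on $\{0,1\}^n$, and let $V_t$ be the $\mathrm{OneMax}$ value (number of $1$s) of its current search point after $t$ iterations. Then, as $n\to\infty$, \[ \mathbb{E}[V_t]\ \ge\ \begin{cases}\dfrac n2+\dfrac{t}{2\sqrt e}-O(1), & \text{if } t=O(\sqrt n),\\[2mm] \dfrac n2+\dfrac{t}{2\sqrt e}(1-o(1)), &\text{if } t=o(n).\end{cases} \] Furthermore, for all $t\ge0$, $\mathbb{E}[V_t]\ge n\bigl(1-\exp(-t/(en))/2\bigr)$.
   Context: $\mathrm{OneMax}(x)=\sum_{i=1}^n x_i$ for $x\in\{0,1\}^n$. The (1+1) EA maximizing $f\colon\{0,1\}^n\to\mathbb{R}$: choose $x\in\{0,1\}^n$ uniformly at random; then repeatedly (one iteration) create $y$ from $x$ by flipping each bit independently with probability $1/n$, and replace $x$ by $y$ if $f(y)\ge f(x)$; the algorithm stops once the optimum is reached (the search point then stays at the optimum). Asymptotic notation refers to $n\to\infty$. *)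

theory Defs
  imports "HOL-Probability.Probability"
begin

text \<open>Bit strings of length n are lists of booleans (True = 1).\<close>

definition onemax :: "bool list \<Rightarrow> nat" where
  "onemax x = length (filter id x)"

fun mutate :: "real \<Rightarrow> bool list \<Rightarrow> bool list pmf" where
  "mutate p [] = return_pmf []"
| "mutate p (b # bs) =
     do { f \<leftarrow> bernoulli_pmf p; bs' \<leftarrow> mutate p bs; return_pmf ((b \<noteq> f) # bs') }"

definition ea_step :: "nat \<Rightarrow> bool list \<Rightarrow> bool list pmf" where
  "ea_step n x =
     (if onemax x = length x then return_pmf x
      else do { y \<leftarrow> mutate (1 / real n) x;
                return_pmf (if onemax y \<ge> onemax x then y else x) })"

fun ea_state :: "nat \<Rightarrow> nat \<Rightarrow> bool list pmf" where
  "ea_state n 0 = pmf_of_set {x. length x = n}"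
| "ea_state n (Suc t) = ea_state n t \<bind> ea_step n"

definition exp_value :: "nat \<Rightarrow> nat \<Rightarrow> real" where
  "exp_value n t = measure_pmf.expectation (ea_state n t) (\<lambda>x. real (onemax x))"

end

theory Submission
  imports Defs
begin

(* Mutation certainly produces an accepted improvement when it flips no 1-bit, so a search point
   with v ones gains in expectation at least (n - v)/n * (1 - 1/n)^v, the expected number of flipped
   0-bits on that event. A linear minorant alpha + beta v of this drift turns into the affine recurrence
   E[V_(t+1)] >= (1 + beta) E[V_t] + alpha, starting from E[V_0] = n/2. The minorant (n - v)/(e n)
   makes n - E[V_t] decay geometrically, giving the exponential bound. The tangent of the convex
   map v |-> (1 - 1/n)^v at v = n/2 gives a drift of about 1/(2 sqrt e) near n/2, with a slope of
   order 1/n; solving the recurrence yields E[V_t] >= n/2 + t/(2 sqrt e) (1 - 1/n - 2t/n), which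
   implies both asymptotic bounds. *)

lemma expectation_bind_finite_pmf:
  fixes h :: "'b \<Rightarrow> real"
  assumes "finite (set_pmf p)" "\<And>x. x \<in> set_pmf p \<Longrightarrow> finite (set_pmf (f x))"
  shows "measure_pmf.expectation (p \<bind> f) h =
         measure_pmf.expectation p (\<lambda>x. measure_pmf.expectation (f x) h)"
  using assms by (simp add: pmf_expectation_bind[of "set_pmf p"] integral_measure_pmf[of "set_pmf p"])

lemma expectation_mono_finite_pmf:
  fixes f g :: "'a \<Rightarrow> real"
  assumes "finite (set_pmf p)" "\<And>x. x \<in> set_pmf p \<Longrightarrow> f x \<le> g x"
  shows "measure_pmf.expectation p f \<le> measure_pmf.expectation p g"
  using assms by (intro integral_mono_AE) (auto simp: integrable_measure_pmf_finite AE_pmfI)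

lemma finite_set_pmf_mutate: "finite (set_pmf (mutate p x))"
  by (induction x) auto

lemma length_mutate: "y \<in> set_pmf (mutate p x) \<Longrightarrow> length y = length x"
  by (induction x arbitrary: y) auto

lemma expectation_mutate_Cons:
  fixes F :: "bool list \<Rightarrow> real"
  assumes "0 \<le> p" "p \<le> 1"
  shows "measure_pmf.expectation (mutate p (b # bs)) F =
    p * measure_pmf.expectation (mutate p bs) (\<lambda>y. F ((\<not> b) # y)) +
    (1 - p) * measure_pmf.expectation (mutate p bs) (\<lambda>y. F (b # y))"
  using assms
  by (simp add: expectation_bind_finite_pmf finite_set_pmf_mutate algebra_simps)

definition keeps_ones :: "bool list \<Rightarrow> bool list \<Rightarrow> bool" where
  "keeps_ones x y = list_all2 (\<longrightarrow>) x y"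

definition flipped_zeros :: "bool list \<Rightarrow> bool list \<Rightarrow> nat" where
  "flipped_zeros x y = length (filter (\<lambda>(b, c). \<not> b \<and> c) (zip x y))"

lemma keeps_ones_Cons [simp]:
  "keeps_ones (b # bs) (c # cs) \<longleftrightarrow> (b \<longrightarrow> c) \<and> keeps_ones bs cs"
  by (simp add: keeps_ones_def)

lemma flipped_zeros_Nil [simp]: "flipped_zeros [] y = 0"
  by (simp add: flipped_zeros_def)

lemma flipped_zeros_Cons [simp]:
  "flipped_zeros (b # bs) (c # cs) = (if \<not> b \<and> c then 1 else 0) + flipped_zeros bs cs"
  by (simp add: flipped_zeros_def)

lemma onemax_Cons [simp]: "onemax (b # bs) = (if b then 1 else 0) + onemax bs"
  by (simp add: onemax_def)

lemma onemax_le_length: "onemax x \<le> length x"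
  by (simp add: onemax_def)

lemma onemax_if_keeps_ones:
  "keeps_ones x y \<Longrightarrow> onemax y = onemax x + flipped_zeros x y"
proof (induction x arbitrary: y)
  case Nil
  then show ?case by (simp add: keeps_ones_def onemax_def)
next
  case (Cons b bs)
  then obtain c cs where "y = c # cs"
    by (cases y) (auto simp: keeps_ones_def)
  with Cons show ?case by auto
qed

lemma expectation_keeps_ones:
  assumes "0 \<le> p" "p \<le> 1"
  shows "measure_pmf.expectation (mutate p x) (\<lambda>y. of_bool (keeps_ones x y)) =
         (1 - p) ^ onemax x"
proof (induction x)
  case Nil
  then show ?case by (simp add: keeps_ones_def onemax_def)
next
  case (Cons b bs)
  then show ?case
    using assms by (simp only: expectation_mutate_Cons) (auto simp: algebra_simps)
qed

lemma expectation_flipped_zeros_keeps_ones: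
  assumes "0 \<le> p" "p \<le> 1"
  shows "measure_pmf.expectation (mutate p x)
           (\<lambda>y. of_bool (keeps_ones x y) * real (flipped_zeros x y)) =
         real (length x - onemax x) * p * (1 - p) ^ onemax x"
proof (induction x)
  case Nil
  then show ?case by (simp add: onemax_def)
next
  case (Cons b bs)
  let ?E1 = "measure_pmf.expectation (mutate p bs) (\<lambda>y. of_bool (keeps_ones bs y))"
  let ?E2 = "measure_pmf.expectation (mutate p bs)
               (\<lambda>y. of_bool (keeps_ones bs y) * real (flipped_zeros bs y))"
  show ?case
  proof (cases b)
    case True
    with Cons.IH show ?thesis
      using assms by (simp only: expectation_mutate_Cons) (simp add: True algebra_simps)
  next
    case False
    have "measure_pmf.expectation (mutate p bs)
            (\<lambda>y. of_bool (keeps_ones bs y) * real (1 + flipped_zeros bs y)) = ?E1 + ?E2"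
      by (simp add: distrib_left integrable_measure_pmf_finite finite_set_pmf_mutate)
    then have "measure_pmf.expectation (mutate p (False # bs))
            (\<lambda>y. of_bool (keeps_ones (False # bs) y) * real (flipped_zeros (False # bs) y)) =
          p * (?E1 + ?E2) + (1 - p) * ?E2"
      using assms by (simp only: expectation_mutate_Cons) simp
    also have "\<dots> = p * ?E1 + ?E2"
      by algebra
    also have "\<dots> = real (length (False # bs) - onemax (False # bs)) * p * (1 - p) ^ onemax (False # bs)"
      using assms Cons.IH onemax_le_length[of bs]
      by (simp add: expectation_keeps_ones of_nat_diff algebra_simps)
    finally show ?thesis
      using False by simp
  qed
qed

definition onemax_drift :: "nat \<Rightarrow> nat \<Rightarrow> real" where
  "onemax_drift n v = real (n - v) / real n * (1 - 1 / real n) ^ v"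

lemma expectation_onemax_ea_step_ge:
  assumes "n \<ge> 1" "length x = n"
  shows "real (onemax x) + onemax_drift n (onemax x) \<le>
         measure_pmf.expectation (ea_step n x) (\<lambda>y. real (onemax y))"
proof (cases "onemax x = length x")
  case True
  then show ?thesis
    using assms by (simp add: ea_step_def onemax_drift_def)
next
  case False
  define p where "p = 1 / real n"
  have p: "0 \<le> p" "p \<le> 1"
    using assms(1) by (auto simp: p_def)
  define select where "select y = (if onemax y \<ge> onemax x then y else x)" for y
  have "ea_step n x = mutate p x \<bind> (\<lambda>y. return_pmf (select y))"
    using False by (simp add: ea_step_def p_def select_def)
  then have "measure_pmf.expectation (ea_step n x) (\<lambda>y. real (onemax y)) =
             measure_pmf.expectation (mutate p x) (\<lambda>y. real (onemax (select y)))"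
    by (simp add: expectation_bind_finite_pmf finite_set_pmf_mutate)
  also have "\<dots> \<ge> measure_pmf.expectation (mutate p x)
               (\<lambda>y. real (onemax x) + of_bool (keeps_ones x y) * real (flipped_zeros x y))"
    by (rule expectation_mono_finite_pmf[OF finite_set_pmf_mutate])
       (auto simp: select_def onemax_if_keeps_ones)
  also have "measure_pmf.expectation (mutate p x)
               (\<lambda>y. real (onemax x) + of_bool (keeps_ones x y) * real (flipped_zeros x y)) =
             real (onemax x) + onemax_drift n (onemax x)"
    using p assms(2)
    by (simp add: integrable_measure_pmf_finite finite_set_pmf_mutate
                  expectation_flipped_zeros_keeps_ones onemax_drift_def p_def)
  finally show ?thesis .
qed

lemma finite_bool_lists_length_eq: "finite {x :: bool list. length x = n}"
  using finite_lists_length_eq[of "UNIV :: bool set" n] by simp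

lemma bool_lists_length_eq_nonempty: "{x :: bool list. length x = n} \<noteq> {}"
  by (auto intro!: exI[of _ "replicate n False"])

lemma finite_set_pmf_ea_state: "finite (set_pmf (ea_state n t))"
  and length_ea_state: "x \<in> set_pmf (ea_state n t) \<Longrightarrow> length x = n"
proof -
  have "finite (set_pmf (ea_state n t)) \<and> (\<forall>x \<in> set_pmf (ea_state n t). length x = n)"
  proof (induction t)
    case 0
    show ?case
      using finite_bool_lists_length_eq bool_lists_length_eq_nonempty by (auto simp: set_pmf_of_set)
  next
    case (Suc t)
    then show ?case
      by (auto simp: ea_step_def finite_set_pmf_mutate length_mutate split: if_splits)
  qed
  then show "finite (set_pmf (ea_state n t))" "x \<in> set_pmf (ea_state n t) \<Longrightarrow> length x = n"
    by auto
qed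

lemma onemax_map_Not: "onemax (map Not x) = length x - onemax x"
  using sum_length_filter_compl[of id x] by (simp add: onemax_def filter_map comp_def)

lemma exp_value_0: "exp_value n 0 = real n / 2"
proof -
  let ?S = "{x :: bool list. length x = n}"
  note fin = finite_bool_lists_length_eq[of n] and ne = bool_lists_length_eq_nonempty[of n]
  have "bij_betw (map Not) ?S ?S"
    by (rule bij_betwI[where g = "map Not"]) (auto simp: comp_def)
  then have "(\<Sum>x\<in>?S. real (onemax x)) = (\<Sum>x\<in>?S. real (onemax (map Not x)))"
    using sum.reindex_bij_betw[of "map Not" ?S ?S "\<lambda>x. real (onemax x)"] by simp
  also have "\<dots> = (\<Sum>x\<in>?S. real n - real (onemax x))"
    by (intro sum.cong refl) (auto simp: onemax_map_Not of_nat_diff onemax_le_length)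
  finally have "2 * (\<Sum>x\<in>?S. real (onemax x)) = real n * card ?S"
    by (simp add: sum_subtractf)
  moreover have "card ?S > 0"
    using fin ne by (simp add: card_gt_0_iff)
  ultimately show ?thesis
    by (simp add: exp_value_def integral_pmf_of_set[OF ne fin] field_simps)
qed

lemma exp_value_Suc_ge_affine:
  assumes "n \<ge> 1" "\<And>v. v \<le> n \<Longrightarrow> \<alpha> + \<beta> * real v \<le> onemax_drift n v"
  shows "(1 + \<beta>) * exp_value n t + \<alpha> \<le> exp_value n (Suc t)"
proof -
  have "(1 + \<beta>) * exp_value n t + \<alpha> =
        measure_pmf.expectation (ea_state n t) (\<lambda>x. (1 + \<beta>) * real (onemax x) + \<alpha>)"
    by (simp add: exp_value_def integrable_measure_pmf_finite finite_set_pmf_ea_state)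
  also have "\<dots> \<le> measure_pmf.expectation (ea_state n t)
                   (\<lambda>x. measure_pmf.expectation (ea_step n x) (\<lambda>y. real (onemax y)))"
  proof (rule expectation_mono_finite_pmf[OF finite_set_pmf_ea_state])
    fix x assume "x \<in> set_pmf (ea_state n t)"
    then have "length x = n"
      by (rule length_ea_state)
    then have "\<alpha> + \<beta> * real (onemax x) \<le> onemax_drift n (onemax x)"
      using assms(2) onemax_le_length[of x] by simp
    with assms(1) \<open>length x = n\<close> expectation_onemax_ea_step_ge[of n x]
    show "(1 + \<beta>) * real (onemax x) + \<alpha> \<le>
          measure_pmf.expectation (ea_step n x) (\<lambda>y. real (onemax y))"
      by (simp add: algebra_simps)
  qed
  also have "\<dots> = exp_value n (Suc t)"
    by (simp add: exp_value_def expectation_bind_finite_pmf finite_set_pmf_ea_state ea_step_def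
                  finite_set_pmf_mutate)
  finally show ?thesis .
qed

lemma exp_minus_one_le_power:
  assumes "n \<ge> 1"
  shows "exp (-1) \<le> (1 - 1 / real n) ^ (n - 1)"
proof (cases "n = 1")
  case True
  then show ?thesis by simp
next
  case False
  define m where "m = n - 1"
  have m: "m > 0" "real n = real m + 1"
    using assms False by (auto simp: m_def)
  have "(1 + 1 / real m) ^ m \<le> exp 1"
    using exp_ge_one_plus_x_over_n_power_n[of m 1] m by simp
  then have "inverse (exp 1) \<le> inverse ((1 + 1 / real m) ^ m)"
    using m by (intro le_imp_inverse_le zero_less_power add_pos_nonneg) auto
  also have "inverse ((1 + 1 / real m) ^ m) = (1 - 1 / real n) ^ m"
    using m by (simp add: power_inverse field_simps)
  finally show ?thesis
    by (simp add: exp_minus m_def)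
qed

lemma onemax_drift_ge_linear:
  assumes "n \<ge> 1" "v \<le> n"
  shows "(real n - real v) / (exp 1 * real n) \<le> onemax_drift n v"
proof (cases "v = n")
  case True
  then show ?thesis by (simp add: onemax_drift_def)
next
  case False
  have "(1 - 1 / real n) ^ (n - 1) \<le> (1 - 1 / real n) ^ v"
    using assms False by (intro power_decreasing) (auto simp: field_simps)
  then have "exp (-1) \<le> (1 - 1 / real n) ^ v"
    using exp_minus_one_le_power[OF assms(1)] by linarith
  then have "real (n - v) / real n * exp (-1) \<le> onemax_drift n v"
    unfolding onemax_drift_def by (intro mult_left_mono) auto
  then show ?thesis
    using assms by (simp add: of_nat_diff exp_minus field_simps)
qed

lemma onemax_drift_ge_tangent:
  fixes n v :: nat
  assumes "n \<ge> 2" "v \<le> n"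
  defines "q \<equiv> 1 - 1 / real n"
  defines "c \<equiv> q powr (real n / 2)"
  shows "c / 2 - c * (1 / real n - ln q / 2) * (real v - real n / 2) \<le> onemax_drift n v"
proof -
  define d where "d = real v - real n / 2"
  have q: "0 < q" "q \<le> 1"
    using assms(1) by (auto simp: q_def field_simps)
  have "q ^ v = q powr (real n / 2 + d)"
    using q by (simp add: d_def powr_realpow)
  also have "\<dots> = c * exp (d * ln q)"
    using q by (simp add: c_def powr_def exp_add[symmetric] algebra_simps)
  also have "\<dots> \<ge> c * (1 + d * ln q)"
    by (intro mult_left_mono) (auto simp: c_def exp_ge_add_one_self)
  finally have tangent: "c * (1 + d * ln q) \<le> q ^ v" .
  have weight: "real (n - v) / real n = 1 / 2 - d / real n"
    using assms(1,2) by (simp add: d_def of_nat_diff field_simps)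
  have expand: "(1 / 2 - d / real n) * (c * (1 + d * ln q)) =
        c / 2 - c * (1 / real n - ln q / 2) * d + c * (d * d) * (- ln q) / real n"
    using assms(1) by (simp add: field_simps)
  have "0 \<le> c * (d * d) * (- ln q) / real n"
    using q by (intro divide_nonneg_nonneg mult_nonneg_nonneg[of "c * (d * d)"]) (auto simp: c_def)
  then have "c / 2 - c * (1 / real n - ln q / 2) * d \<le> (1 / 2 - d / real n) * (c * (1 + d * ln q))"
    unfolding expand by linarith
  also have "\<dots> \<le> (1 / 2 - d / real n) * q ^ v"
    by (rule mult_left_mono[OF tangent]) (simp flip: weight)
  also have "\<dots> = onemax_drift n v"
    by (simp add: onemax_drift_def weight q_def)
  finally show ?thesis
    by (simp add: d_def)
qed

lemma one_minus_inverse_powr_half_ge: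
  assumes "n \<ge> 2"
  shows "(1 - 1 / real n) / sqrt (exp 1) \<le> (1 - 1 / real n) powr (real n / 2)"
proof (rule power2_le_imp_le)
  define q where "q = 1 - 1 / real n"
  have q: "0 < q" "q \<le> 1"
    using assms by (auto simp: q_def field_simps)
  have "(q / sqrt (exp 1))\<^sup>2 = q * q / exp 1"
    by (simp add: power_divide power2_eq_square)
  also have "\<dots> \<le> q / exp 1"
    using q by (intro divide_right_mono mult_left_le) auto
  also have "\<dots> = q * exp (-1)"
    by (simp add: exp_minus divide_inverse)
  also have "\<dots> \<le> q * q ^ (n - 1)"
    using q exp_minus_one_le_power[of n] assms by (simp add: q_def)
  also have "\<dots> = q ^ n"
    using assms by (simp add: power_eq_if)
  also have "\<dots> = (q powr (real n / 2))\<^sup>2"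
    using q by (simp add: power2_eq_square powr_realpow flip: powr_add)
  finally show "((1 - 1 / real n) / sqrt (exp 1))\<^sup>2 \<le> ((1 - 1 / real n) powr (real n / 2))\<^sup>2"
    by (simp add: q_def)
qed simp

lemma affine_recurrence_geometric:
  fixes x :: "nat \<Rightarrow> real"
  assumes "0 \<le> a" "a \<le> 1" "\<And>s. (1 - a) * x s + a * m \<le> x (Suc s)"
  shows "m - x s \<le> (1 - a) ^ s * (m - x 0)"
proof (induction s)
  case (Suc s)
  have "m - x (Suc s) \<le> (1 - a) * (m - x s)"
    using assms(3)[of s] by (simp add: algebra_simps)
  also have "\<dots> \<le> (1 - a) * ((1 - a) ^ s * (m - x 0))"
    using Suc assms(2) by (intro mult_left_mono) auto
  finally show ?case
    by simp
qed simp

lemma affine_recurrence_quadratic: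
  fixes x :: "nat \<Rightarrow> real"
  assumes "0 \<le> a" "a \<le> 1" "0 \<le> b" "0 \<le> x 0"
    and "\<And>s. (1 - a) * x s + b \<le> x (Suc s)"
  shows "0 \<le> x s \<and> b * (real s - a * real s ^ 2) \<le> x s"
proof (induction s)
  case (Suc s)
  then have "0 \<le> (1 - a) * x s"
    using assms(2) by simp
  moreover have "(1 - a) * (b * (real s - a * real s ^ 2)) \<le> (1 - a) * x s"
    using Suc assms(2) by (intro mult_left_mono) auto
  moreover have "b * (real (Suc s) - a * real (Suc s) ^ 2) + b * (a * real s + a + a\<^sup>2 * real s ^ 2) =
                 (1 - a) * (b * (real s - a * real s ^ 2)) + b"
    by (simp add: algebra_simps power2_eq_square)
  moreover have "0 \<le> b * (a * real s + a + a\<^sup>2 * real s ^ 2)"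
    using assms(1,3) by simp
  ultimately show ?case
    using assms(3) assms(5)[of s] by linarith
qed (use assms(4) in simp)

lemma exp_value_ge_exp_decay:
  assumes "n \<ge> 1"
  shows "real n * (1 - exp (- real t / (exp 1 * real n)) / 2) \<le> exp_value n t"
proof -
  define a where "a = 1 / (exp 1 * real n)"
  have "1 \<le> exp 1 * real n"
    using assms one_le_exp_iff[of 1] by (intro mult_ge1_I) auto
  then have a: "0 \<le> a" "a \<le> 1"
    by (auto simp: a_def)
  have "(1 - a) * exp_value n s + a * real n \<le> exp_value n (Suc s)" for s
  proof -
    have "a * real n + (- a) * real v \<le> onemax_drift n v" if "v \<le> n" for v
      using onemax_drift_ge_linear[OF assms that] by (simp add: a_def diff_divide_distrib)
    from exp_value_Suc_ge_affine[OF assms this]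
    show ?thesis by simp
  qed
  then have "real n - exp_value n t \<le> (1 - a) ^ t * (real n - exp_value n 0)"
    by (rule affine_recurrence_geometric[OF a])
  also have "\<dots> = (1 - a) ^ t * (real n / 2)"
    by (simp add: exp_value_0)
  also have "\<dots> \<le> exp (- a) ^ t * (real n / 2)"
    using a exp_ge_add_one_self[of "- a"] by (intro mult_right_mono power_mono) auto
  also have "exp (- a) ^ t = exp (- real t / (exp 1 * real n))"
    by (simp add: a_def flip: exp_of_nat_mult)
  finally show ?thesis
    by (simp add: algebra_simps)
qed

lemma tangent_slope_bounds:
  assumes "n \<ge> 2"
  defines "q \<equiv> 1 - 1 / real n"
  defines "c \<equiv> q powr (real n / 2)"
  shows "0 \<le> c * (1 / real n - ln q / 2)" and "c * (1 / real n - ln q / 2) \<le> 2 / real n"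
proof -
  have q: "0 < q" "q \<le> 1"
    using assms(1) by (auto simp: q_def field_simps)
  have "ln q \<le> 0" "0 \<le> 1 / real n"
    using q by simp_all
  then have slope_ge: "0 \<le> 1 / real n - ln q / 2"
    by linarith
  then show "0 \<le> c * (1 / real n - ln q / 2)"
    by (simp add: c_def)
  have "- 1 / real n - 2 * (1 / real n)\<^sup>2 \<le> ln q"
    using ln_one_minus_pos_lower_bound[of "1 / real n"] assms(1) by (simp add: q_def)
  then have slope_le: "1 / real n - ln q / 2 \<le> 2 / real n"
    using assms(1) by (simp add: power2_eq_square field_simps)
  have "c \<le> 1"
    using powr_mono2[of "real n / 2" q 1] q by (simp add: c_def)
  then have "c * (1 / real n - ln q / 2) \<le> 1 * (1 / real n - ln q / 2)"
    by (rule mult_right_mono[OF _ slope_ge])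
  with slope_le show "c * (1 / real n - ln q / 2) \<le> 2 / real n"
    by simp
qed

lemma exp_value_ge_quadratic:
  assumes "n \<ge> 2"
  defines "q \<equiv> 1 - 1 / real n"
  defines "c \<equiv> q powr (real n / 2)"
  defines "a \<equiv> c * (1 / real n - ln q / 2)"
  shows "0 \<le> exp_value n t - real n / 2 \<and>
         c / 2 * (real t - a * real t ^ 2) \<le> exp_value n t - real n / 2"
proof (rule affine_recurrence_quadratic)
  show "0 \<le> a" "a \<le> 1"
    using tangent_slope_bounds[OF assms(1)] assms(1)
    by (auto simp: a_def c_def q_def intro: order_trans[of _ "2 / real n"])
  show "0 \<le> c / 2"
    by (simp add: c_def)
  show "0 \<le> exp_value n 0 - real n / 2"
    by (simp add: exp_value_0)
  fix s
  have "(c / 2 + a * real n / 2) + (- a) * real v \<le> onemax_drift n v" if "v \<le> n" for v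
  proof -
    have "c / 2 - a * (real v - real n / 2) \<le> onemax_drift n v"
      using onemax_drift_ge_tangent[OF assms(1) that] unfolding a_def c_def q_def .
    then show ?thesis
      by (simp add: algebra_simps)
  qed
  from exp_value_Suc_ge_affine[OF _ this, of s] assms(1)
  show "(1 - a) * (exp_value n s - real n / 2) + c / 2 \<le> exp_value n (Suc s) - real n / 2"
    by (simp add: algebra_simps diff_divide_distrib)
qed

lemma exp_value_ge_linear_phase:
  assumes "n \<ge> 2"
  shows "real n / 2 + real t / (2 * sqrt (exp 1)) * (1 - (1 / real n + 2 * real t / real n))
           \<le> exp_value n t"
proof (cases "2 * real t \<le> real n")
  case False
  then have "real t / (2 * sqrt (exp 1)) * (1 - (1 / real n + 2 * real t / real n)) \<le> 0"
    using assms by (intro mult_nonneg_nonpos) (auto simp: field_simps)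
  with exp_value_ge_quadratic[OF assms, of t] show ?thesis
    by linarith
next
  case True
  define q where "q = 1 - 1 / real n"
  define c where "c = q powr (real n / 2)"
  define a where "a = c * (1 / real n - ln q / 2)"
  have deficit: "c / 2 * (real t - a * real t ^ 2) \<le> exp_value n t - real n / 2"
    using exp_value_ge_quadratic[OF assms, of t] unfolding a_def c_def q_def by blast
  have "0 \<le> 1 - 2 * real t / real n"
    using True assms by (simp add: field_simps)
  have "real t / (2 * sqrt (exp 1)) * (1 - (1 / real n + 2 * real t / real n))
        \<le> real t / (2 * sqrt (exp 1)) * (q * (1 - 2 * real t / real n))"
    using assms by (intro mult_left_mono) (auto simp: q_def field_simps)
  also have "\<dots> = q / sqrt (exp 1) * (real t / 2 * (1 - 2 * real t / real n))"
    by (simp add: field_simps)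
  also have "\<dots> \<le> c * (real t / 2 * (1 - 2 * real t / real n))"
    using one_minus_inverse_powr_half_ge[OF assms] \<open>0 \<le> 1 - 2 * real t / real n\<close>
    by (intro mult_right_mono) (auto simp: c_def q_def)
  also have "\<dots> = c / 2 * (real t - 2 / real n * real t ^ 2)"
    by (simp add: field_simps power2_eq_square)
  also have "\<dots> \<le> c / 2 * (real t - a * real t ^ 2)"
    using tangent_slope_bounds(2)[OF assms]
    by (intro mult_left_mono diff_left_mono mult_right_mono) (auto simp: a_def c_def q_def)
  finally show ?thesis
    using deficit by linarith
qed

lemma linear_phase_error_le:
  fixes T C :: real
  assumes "n \<ge> 1" "0 \<le> T" "0 \<le> C" "T \<le> C * sqrt (real n)"
  shows "T / (2 * sqrt (exp 1)) * (1 / real n + 2 * T / real n) \<le> C + C\<^sup>2"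
proof -
  have "T / (2 * sqrt (exp 1)) * (1 / real n + 2 * T / real n) \<le> T / 2 * (1 / real n + 2 * T / real n)"
    using assms(2) by (intro mult_right_mono divide_left_mono) auto
  also have "\<dots> = T / (2 * real n) + T\<^sup>2 / real n"
    using assms(1) by (simp add: field_simps power2_eq_square)
  also have "T / (2 * real n) \<le> C"
  proof -
    have "sqrt (real n) \<le> sqrt ((real n)\<^sup>2)"
      using assms(1) by (intro real_sqrt_le_mono) (simp add: power2_eq_square)
    then have "T \<le> C * real n"
      using assms(3,4) by (simp add: order_trans[OF _ mult_left_mono])
    then show ?thesis
      using assms(1,2) by (simp add: field_simps)
  qed
  also have "T\<^sup>2 / real n \<le> C\<^sup>2"
  proof -
    have "T\<^sup>2 \<le> (C * sqrt (real n))\<^sup>2"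
      using assms(2,4) by (intro power_mono) auto
    then show ?thesis
      using assms(1) by (simp add: power_mult_distrib field_simps)
  qed
  finally show ?thesis
    by simp
qed

lemma exp_value_ge_sqrt_regime:
  fixes t :: "nat \<Rightarrow> nat"
  assumes "(\<lambda>n. real (t n)) \<in> O(\<lambda>n. sqrt (real n))"
  shows "\<exists>C. \<forall>\<^sub>F n in at_top. real n / 2 + real (t n) / (2 * sqrt (exp 1)) - C \<le> exp_value n (t n)"
proof -
  obtain C where C: "C > 0" "\<forall>\<^sub>F n in at_top. norm (real (t n)) \<le> C * norm (sqrt (real n))"
    using assms by (elim landau_o.bigE)
  have "\<forall>\<^sub>F n in at_top. real n / 2 + real (t n) / (2 * sqrt (exp 1)) - (C + C\<^sup>2) \<le> exp_value n (t n)"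
    using C(2) eventually_ge_at_top[of "2 :: nat"]
  proof eventually_elim
    case (elim n)
    then have "real (t n) / (2 * sqrt (exp 1)) * (1 / real n + 2 * real (t n) / real n) \<le> C + C\<^sup>2"
      using C(1) by (intro linear_phase_error_le) auto
    with exp_value_ge_linear_phase[OF elim(2), of "t n"] show ?case
      by (simp add: algebra_simps)
  qed
  then show ?thesis
    by blast
qed

lemma exp_value_ge_sublinear_regime:
  fixes t :: "nat \<Rightarrow> nat"
  assumes "(\<lambda>n. real (t n)) \<in> o(\<lambda>n. real n)"
  shows "\<exists>g :: nat \<Rightarrow> real. g \<longlonglongrightarrow> 0 \<and>
           (\<forall>\<^sub>F n in at_top. real n / 2 + real (t n) / (2 * sqrt (exp 1)) * (1 - g n) \<le> exp_value n (t n))"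
proof (intro exI conjI)
  show "(\<lambda>n. 1 / real n + 2 * (real (t n) / real n)) \<longlonglongrightarrow> 0"
    using tendsto_add[OF lim_1_over_n tendsto_mult_right_zero[OF smalloD_tendsto[OF assms]]]
    by simp
  show "\<forall>\<^sub>F n in at_top. real n / 2 + real (t n) / (2 * sqrt (exp 1)) *
          (1 - (1 / real n + 2 * (real (t n) / real n))) \<le> exp_value n (t n)"
    using eventually_ge_at_top[of "2 :: nat"] by eventually_elim (use exp_value_ge_linear_phase in simp)
qed

theorem theorem7:
  shows "(\<forall>t :: nat \<Rightarrow> nat. (\<lambda>n. real (t n)) \<in> O(\<lambda>n. sqrt (real n)) \<longrightarrow>
            (\<exists>C. \<forall>\<^sub>F n in at_top.
               exp_value n (t n) \<ge> real n / 2 + real (t n) / (2 * sqrt (exp 1)) - C))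
     \<and> (\<forall>t :: nat \<Rightarrow> nat. (\<lambda>n. real (t n)) \<in> o(\<lambda>n. real n) \<longrightarrow>
            (\<exists>g :: nat \<Rightarrow> real. (g \<longlongrightarrow> 0) at_top \<and> (\<forall>\<^sub>F n in at_top.
               exp_value n (t n) \<ge> real n / 2 + real (t n) / (2 * sqrt (exp 1)) * (1 - g n))))
     \<and> (\<forall>n t. n \<ge> 1 \<longrightarrow>
            exp_value n t \<ge> real n * (1 - exp (- real t / (exp 1 * real n)) / 2))"
  using exp_value_ge_sqrt_regime exp_value_ge_sublinear_regime exp_value_ge_exp_decay by blast

end
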